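(* Let $n\ge1$, $a\in\mathcal{IS}_n$, and consider the semigroup $(\mathcal{IS}_n,*_a)$. Let $x\in\mathcal{IS}_n$. If $\operatorname{dom}(x)\subseteq\operatorname{ran}(a)$, then the $\mathcal{L}$-class of $x$ is $$L_x=\{y\in\mathcal{IS}_n : \operatorname{ran}(y)=\operatorname{ran}(x),\ \operatorname{dom}(y)\subseteq\operatorname{ran}(a)\};$$ otherwise $L_x=\{x\}$.
   Context: $\mathcal{IS}_n$ is the set of all partial injective maps of $N=\{1,\dots,n\}$, including the empty map; $\operatorname{dom}(x)$, $\operatorname{ran}(x)$ denote domain and range. Maps are composed from left to right: $(xy)(i)=y(x(i))$, defined exactly when $i\in\operatorname{dom}(x)$ and $x(i)\in\operatorname{dom}(y)$. For fixed $a\in\mathcal{IS}_n$, $x*_a y:=xay$. Green's relations in a semigroup $S$: with $S^1$ the semigroup $S$ with an identity adjoined, $x\mathcal{L}y$ iff $S^1x=S^1y$, $x\mathcal{R}y$ iff $xS^1=yS^1$, $\mathcal{H}=\mathcal{L}\cap\mathcal{R}$, $\mathcal{D}=\mathcal{L}\circ\mathcal{R}$ (which equals $\mathcal{R}\circ\mathcal{L}$). $L_x,R_x,H_x,D_x$ denote the corresponding classes of $x$, here computed in $(\mathcal{IS}_n,*_a)$. *)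

theory Defs
  imports Main
begin

definition IS :: "nat \<Rightarrow> (nat \<Rightarrow> nat option) set" where
  "IS n = {f. dom f \<subseteq> {1..n} \<and> ran f \<subseteq> {1..n} \<and> inj_on f (dom f)}"

text \<open>Left-to-right composition: (x ; y)(i) = y(x(i)).\<close>
definition pcomp :: "(nat \<Rightarrow> nat option) \<Rightarrow> (nat \<Rightarrow> nat option) \<Rightarrow> (nat \<Rightarrow> nat option)" where
  "pcomp x y = y \<circ>\<^sub>m x"

definition sandwich :: "(nat \<Rightarrow> nat option) \<Rightarrow> (nat \<Rightarrow> nat option) \<Rightarrow> (nat \<Rightarrow> nat option) \<Rightarrow> (nat \<Rightarrow> nat option)" where
  "sandwich a x y = pcomp (pcomp x a) y"

text \<open>Green's L relation in a semigroup (S, mult): S^1 x = S^1 y.\<close>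
definition left_ideal1 :: "'a set \<Rightarrow> ('a \<Rightarrow> 'a \<Rightarrow> 'a) \<Rightarrow> 'a \<Rightarrow> 'a set" where
  "left_ideal1 S mult x = insert x ((\<lambda>s. mult s x) ` S)"

definition greenL :: "'a set \<Rightarrow> ('a \<Rightarrow> 'a \<Rightarrow> 'a) \<Rightarrow> 'a \<Rightarrow> 'a \<Rightarrow> bool" where
  "greenL S mult x y \<longleftrightarrow> left_ideal1 S mult x = left_ideal1 S mult y"

definition L_class :: "'a set \<Rightarrow> ('a \<Rightarrow> 'a \<Rightarrow> 'a) \<Rightarrow> 'a \<Rightarrow> 'a set" where
  "L_class S mult x = {y \<in> S. greenL S mult x y}"

end

theory Submission
  imports Defs
begin

text \<open>
  Since \<open>s *\<^sub>a x = s (a x)\<close>, the principal left ideal of \<open>x\<close> in \<open>(IS n, *\<^sub>a)\<close> is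
  \<open>{x} \<union> IS n (a x)\<close>, and in \<open>IS n\<close> the left multiples of an element \<open>m\<close> are exactly the maps
  with range inside \<open>ran m\<close>.  Hence \<open>y \<noteq> x\<close> is \<open>\<L>\<close>-related to \<open>x\<close> iff
  \<open>ran y \<subseteq> ran (a x)\<close> and \<open>ran x \<subseteq> ran (a y)\<close>.  As \<open>ran (a x) \<subseteq> ran x\<close>, with equality
  iff \<open>dom x \<subseteq> ran a\<close> (by injectivity of \<open>x\<close>), this says \<open>ran x = ran y\<close> with both
  domains inside \<open>ran a\<close>.
\<close>

lemma inj_on_dom_SomeD: "inj_on f (dom f) \<Longrightarrow> f i = Some v \<Longrightarrow> f j = Some v \<Longrightarrow> i = j"
  by (metis domI inj_onD)

lemma IS_inj: "f \<in> IS n \<Longrightarrow> f i = Some v \<Longrightarrow> f j = Some v \<Longrightarrow> i = j"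
  by (auto simp: IS_def intro: inj_on_dom_SomeD)

lemma pcomp_assoc: "pcomp (pcomp x y) z = pcomp x (pcomp y z)"
  by (rule ext) (simp add: pcomp_def map_comp_def split: option.splits)

lemma sandwich_eq_pcomp: "sandwich a s x = pcomp s (pcomp a x)"
  by (simp add: sandwich_def pcomp_assoc)

lemma ran_pcomp_subset: "ran (pcomp x y) \<subseteq> ran y"
  by (auto simp: pcomp_def ran_def map_comp_Some_iff)

lemma pcomp_in_IS:
  assumes "x \<in> IS n" "y \<in> IS n"
  shows "pcomp x y \<in> IS n"
proof -
  have "dom (pcomp x y) \<subseteq> dom x"
    by (auto simp: pcomp_def map_comp_Some_iff)
  moreover have "inj_on (pcomp x y) (dom (pcomp x y))"
  proof (rule inj_onI)
    fix i j assume "i \<in> dom (pcomp x y)" "pcomp x y i = pcomp x y j"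
    then obtain v where "pcomp x y i = Some v" "pcomp x y j = Some v" by (metis domD)
    then obtain k l where "x i = Some k" "y k = Some v" "x j = Some l" "y l = Some v"
      by (auto simp: pcomp_def map_comp_Some_iff)
    then show "i = j" using IS_inj[OF assms(1)] IS_inj[OF assms(2)] by metis
  qed
  ultimately show ?thesis
    using assms ran_pcomp_subset[of x y] unfolding IS_def by blast
qed

lemma ran_pcomp_eq_iff:
  assumes "inj_on y (dom y)"
  shows "ran (pcomp x y) = ran y \<longleftrightarrow> dom y \<subseteq> ran x"
proof
  assume eq: "ran (pcomp x y) = ran y"
  show "dom y \<subseteq> ran x"
  proof
    fix j assume "j \<in> dom y"
    then obtain v where v: "y j = Some v" by blast
    then have "v \<in> ran (pcomp x y)" using eq by (auto simp: ran_def)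
    then obtain i k where "x i = Some k" "y k = Some v"
      by (auto simp: pcomp_def ran_def map_comp_Some_iff)
    with v assms have "k = j" by (auto intro: inj_on_dom_SomeD)
    with \<open>x i = Some k\<close> show "j \<in> ran x" by (auto simp: ran_def)
  qed
next
  assume "dom y \<subseteq> ran x"
  then have "ran y \<subseteq> ran (pcomp x y)"
    by (fastforce simp: pcomp_def ran_def map_comp_Some_iff)
  with ran_pcomp_subset show "ran (pcomp x y) = ran y" by blast
qed

lemma left_multiples_IS:
  assumes "m \<in> IS n"
  shows "(\<lambda>s. pcomp s m) ` IS n = {z \<in> IS n. ran z \<subseteq> ran m}"
proof (intro equalityI subsetI)
  fix z assume "z \<in> (\<lambda>s. pcomp s m) ` IS n"
  with assms ran_pcomp_subset show "z \<in> {z \<in> IS n. ran z \<subseteq> ran m}"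
    by (auto intro: pcomp_in_IS)
next
  fix z assume "z \<in> {z \<in> IS n. ran z \<subseteq> ran m}"
  then have z: "z \<in> IS n" and ran_z: "ran z \<subseteq> ran m" by auto
  define pre where "pre v = (SOME k. m k = Some v)" for v
  have m_pre: "m (pre v) = Some v" if "z i = Some v" for i v
  proof -
    from that ran_z obtain k where "m k = Some v" by (auto simp: ran_def)
    then show ?thesis unfolding pre_def by (rule someI)
  qed
  define s where "s i = map_option pre (z i)" for i
  have factor: "pcomp s m = z"
  proof
    fix i show "pcomp s m i = z i"
      by (cases "z i") (simp_all add: pcomp_def s_def m_pre)
  qed
  have "s \<in> IS n"
  proof -
    have "dom s = dom z" by (auto simp: s_def)
    moreover have "ran s \<subseteq> dom m" by (auto simp: s_def ran_def m_pre)
    moreover have "inj_on s (dom s)"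
    proof (rule inj_onI)
      fix i j assume "i \<in> dom s" "s i = s j"
      then obtain k where "s i = Some k" "s j = Some k" by (metis domD)
      then have "z i = m k" "z j = m k"
        using factor by (auto simp: pcomp_def dest: fun_cong)
      with \<open>s i = Some k\<close> show "i = j"
        by (auto simp: s_def dest: IS_inj[OF z])
    qed
    ultimately show ?thesis using z assms unfolding IS_def by auto
  qed
  with factor show "z \<in> (\<lambda>s. pcomp s m) ` IS n" by blast
qed

lemma left_ideal1_sandwich:
  assumes "a \<in> IS n" "x \<in> IS n"
  shows "left_ideal1 (IS n) (sandwich a) x = insert x {z \<in> IS n. ran z \<subseteq> ran (pcomp a x)}"
  using left_multiples_IS[OF pcomp_in_IS[OF assms]]
  by (simp add: left_ideal1_def sandwich_eq_pcomp)

lemma greenL_sandwich_iff: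
  assumes a: "a \<in> IS n" and x: "x \<in> IS n" and y: "y \<in> IS n"
  shows "greenL (IS n) (sandwich a) x y \<longleftrightarrow>
    x = y \<or> (ran x = ran y \<and> dom x \<subseteq> ran a \<and> dom y \<subseteq> ran a)"
proof (cases "x = y")
  case False
  have inj: "inj_on x (dom x)" "inj_on y (dom y)" using x y by (simp_all add: IS_def)
  let ?I = "\<lambda>w. {z \<in> IS n. ran z \<subseteq> ran (pcomp a w)}"
  have "greenL (IS n) (sandwich a) x y \<longleftrightarrow> insert x (?I x) = insert y (?I y)"
    by (simp add: greenL_def left_ideal1_sandwich[OF a x] left_ideal1_sandwich[OF a y])
  also have "\<dots> \<longleftrightarrow> ran y \<subseteq> ran (pcomp a x) \<and> ran x \<subseteq> ran (pcomp a y)"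
  proof
    assume "insert x (?I x) = insert y (?I y)"
    with False x y show "ran y \<subseteq> ran (pcomp a x) \<and> ran x \<subseteq> ran (pcomp a y)"
      by (metis (no_types, lifting) insertCI insertE mem_Collect_eq)
  next
    assume "ran y \<subseteq> ran (pcomp a x) \<and> ran x \<subseteq> ran (pcomp a y)"
    moreover from this have "ran (pcomp a x) = ran (pcomp a y)"
      using ran_pcomp_subset[of a x] ran_pcomp_subset[of a y] by blast
    ultimately show "insert x (?I x) = insert y (?I y)" using x y by auto
  qed
  also have "\<dots> \<longleftrightarrow> ran x = ran y \<and> ran (pcomp a x) = ran x \<and> ran (pcomp a y) = ran y"
    using ran_pcomp_subset[of a x] ran_pcomp_subset[of a y] by blast
  also have "\<dots> \<longleftrightarrow> ran x = ran y \<and> dom x \<subseteq> ran a \<and> dom y \<subseteq> ran a"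
    using ran_pcomp_eq_iff[OF inj(1)] ran_pcomp_eq_iff[OF inj(2)] by blast
  finally show ?thesis using False by blast
qed (simp add: greenL_def)

theorem theorem4:
  fixes n :: nat and a x :: "nat \<Rightarrow> nat option"
  assumes "n \<ge> 1" and "a \<in> IS n" and "x \<in> IS n"
  shows "(dom x \<subseteq> ran a \<longrightarrow>
            L_class (IS n) (sandwich a) x = {y \<in> IS n. ran y = ran x \<and> dom y \<subseteq> ran a})
       \<and> (\<not> dom x \<subseteq> ran a \<longrightarrow> L_class (IS n) (sandwich a) x = {x})"
proof -
  have L: "L_class (IS n) (sandwich a) x =
      {y \<in> IS n. x = y \<or> (ran x = ran y \<and> dom x \<subseteq> ran a \<and> dom y \<subseteq> ran a)}"
    using greenL_sandwich_iff[OF assms(2,3)] unfolding L_class_def by blast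
  show ?thesis unfolding L using assms(3) by auto
qed

end
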